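(* For every $\psi\in\Psi$, $$\lambda\Big(\#\{i\le n:\beta_i\ge n\,\psi(\lfloor\log n\rfloor)\}\ge1\ \text{for infinitely many } n\Big)=0.$$
   Context: Let $\lambda$ be Lebesgue measure on $[0,1)$, $\tau(x)=2x\bmod1$, $\chi(x)=\lfloor1/x\rfloor$, $B=[1/2,1)$, $\phi(x)=\inf\{n\in\mathbb N_0:\tau^nx\in B\}+1$, $\tau_Bx=\tau^{\phi(x)}x$ (defined $\lambda$-a.e.), and $\beta_i=\chi\circ\tau_B^{\,i-1}$. $\Psi=\{u:\mathbb N\to\mathbb R_{>0}:\sum_{n\ge1}1/u(n)<\infty\}$. Logarithms are natural. *)

theory Defs
  imports "HOL-Analysis.Analysis"
begin

definition dbl :: "real \<Rightarrow> real" where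
  "dbl x = frac (2 * x)"

definition chi :: "real \<Rightarrow> int" where
  "chi x = \<lfloor>1 / x\<rfloor>"

definition B :: "real set" where
  "B = {1/2..<1}"

text \<open>First entry time plus one (only meaningful a.e., where the set is nonempty).\<close>
definition phi :: "real \<Rightarrow> nat" where
  "phi x = (LEAST n. (dbl ^^ n) x \<in> B) + 1"

definition tauB :: "real \<Rightarrow> real" where
  "tauB x = (dbl ^^ phi x) x"

definition beta :: "nat \<Rightarrow> real \<Rightarrow> int" where
  "beta i x = chi ((tauB ^^ (i - 1)) x)"

end

theory Submission
  imports Defs
begin

text \<open>On the dyadic block \<open>[2^-(k+1), 2^-k)\<close> the induced map \<open>tau_B\<close> is the affine map
  \<open>x \<mapsto> 2^(k+1) x - 1\<close>, which pulls Lebesgue measure back with factor \<open>2^-(k+1)\<close>; summing over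
  \<open>k\<close> shows that \<open>tau_B\<close> never increases the measure of preimages. Hence
  \<open>\<lambda>(\<beta>_i \<ge> t) \<le> \<lambda>(\<chi> \<ge> t) \<le> 1/t\<close> for every \<open>i\<close>. The times \<open>n\<close> with \<open>\<lfloor>log n\<rfloor> = k\<close> lie below
  \<open>e^(k+1)\<close>, so an exceedance at such a time forces \<open>\<beta>_i \<ge> e^k \<psi>(k)\<close> for some \<open>i \<le> e^(k+1)\<close>,
  an event of measure at most \<open>(e + 1)/\<psi>(k)\<close>. These bounds are summable, and Borel--Cantelli
  concludes.\<close>

definition dyadic_block :: "nat \<Rightarrow> real set" where
  "dyadic_block k = {1/2^(k+1)..<1/2^k}"

lemma dyadic_block_subset: "dyadic_block k \<subseteq> {0<..<1}"
proof
  fix x assume "x \<in> dyadic_block k"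
  then have "(0::real) < 1/2^(k+1)" "1/2^(k+1) \<le> x" "x < 1/2^k" "(1::real)/2^k \<le> 1"
    by (simp_all add: dyadic_block_def)
  then have "0 < x" "x < 1" by linarith+
  then show "x \<in> {0<..<1}" by simp
qed

lemma ex_dyadic_block:
  assumes "0 < x" "x < (1::real)"
  shows "\<exists>k. x \<in> dyadic_block k"
proof -
  obtain m :: nat where "1/x < 2^m" using real_arch_pow[of 2 "1/x"] by auto
  then have ex: "1/2^m \<le> x" using assms by (simp add: field_simps)
  define m0 where "m0 = (LEAST m::nat. 1/2^m \<le> x)"
  have m0: "1/2^m0 \<le> x" unfolding m0_def by (rule LeastI[where P="\<lambda>m. 1/2^m \<le> x", OF ex])
  then obtain k where k: "m0 = Suc k" using assms by (cases m0) auto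
  have "k < m0" using k by simp
  then have "\<not> 1/2^k \<le> x" unfolding m0_def by (rule not_less_Least)
  with m0 k show ?thesis by (auto simp: dyadic_block_def)
qed

lemma dyadic_block_scaled_less_one:
  assumes "x \<in> dyadic_block k" "n \<le> k"
  shows "2^n * x < 1"
proof -
  have "0 \<le> x" "2^k * x < 1" using assms(1) dyadic_block_subset[of k]
    by (auto simp: dyadic_block_def field_simps)
  moreover have "(2::real)^n \<le> 2^k" using assms(2) by (rule power_increasing) simp
  ultimately show ?thesis by (meson le_less_trans mult_right_mono)
qed

lemma funpow_dbl_dyadic_block:
  assumes "x \<in> dyadic_block k" "n \<le> k"
  shows "(dbl ^^ n) x = 2^n * x"
  using assms(2)
proof (induction n)
  case (Suc n)
  have "0 \<le> 2 * (2^n * x)" "2 * (2^n * x) < 1"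
    using assms(1) dyadic_block_subset[of k] dyadic_block_scaled_less_one[OF assms(1) Suc.prems]
    by auto
  then show ?case using Suc by (simp add: dbl_def frac_eq)
qed simp

lemma tauB_dyadic_block:
  assumes x: "x \<in> dyadic_block k"
  shows "tauB x = 2^(k+1) * x - 1"
proof -
  have "(LEAST n. (dbl ^^ n) x \<in> B) = k"
  proof (rule Least_equality)
    show "(dbl ^^ k) x \<in> B"
      using x by (simp add: funpow_dbl_dyadic_block B_def dyadic_block_def field_simps)
    show "k \<le> n" if "(dbl ^^ n) x \<in> B" for n
    proof (rule ccontr)
      assume "\<not> k \<le> n"
      then have "2^(n+1) * x < 1" by (intro dyadic_block_scaled_less_one[OF x]) simp
      with that \<open>\<not> k \<le> n\<close> show False by (simp add: funpow_dbl_dyadic_block[OF x] B_def)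
    qed
  qed
  then have "tauB x = frac (2^(k+1) * x)"
    by (simp add: tauB_def phi_def funpow_dbl_dyadic_block[OF x] dbl_def mult.assoc)
  moreover have "\<lfloor>2^(k+1) * x\<rfloor> = 1"
    using x by (intro floor_unique) (auto simp: dyadic_block_def field_simps)
  ultimately show ?thesis by (simp add: frac_def)
qed

lemma tauB_range: "tauB x \<in> {0..<1}"
  by (simp add: tauB_def phi_def dbl_def frac_lt_1)

lemma emeasure_lborel_affine_vimage:
  assumes "S \<in> sets borel" "0 < (c::real)"
  shows "emeasure lborel ((\<lambda>x. c * x + t) -` S) = ennreal (1/c) * emeasure lborel S"
proof -
  have "emeasure lborel S = ennreal c * emeasure lborel ((\<lambda>x. t + c * x) -` S)"
    using assms by (subst lborel_real_affine[of c t]) (simp_all add: emeasure_density_const emeasure_distr)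
  then have "ennreal (1/c) * emeasure lborel S
      = (ennreal (1/c) * ennreal c) * emeasure lborel ((\<lambda>x. c * x + t) -` S)"
    by (simp add: mult.assoc add.commute)
  also have "ennreal (1/c) * ennreal c = 1" using assms(2) by (simp flip: ennreal_mult)
  finally show ?thesis by simp
qed

text \<open>The orbit of \<open>0\<close> never enters \<open>B\<close>, so \<open>tauB 0\<close> is a junk value of \<open>LEAST\<close>; the point is
  split off and later discarded as a null set.\<close>
lemma tauB_vimage_eq:
  "{x\<in>{0..<1}. tauB x \<in> S} =
     {x\<in>{0}. tauB x \<in> S} \<union> (\<Union>k. dyadic_block k \<inter> (\<lambda>x. 2^(k+1) * x - 1) -` S)"
proof (intro equalityI subsetI)
  fix x assume x: "x \<in> {x\<in>{0..<1}. tauB x \<in> S}"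
  show "x \<in> {x\<in>{0}. tauB x \<in> S} \<union> (\<Union>k. dyadic_block k \<inter> (\<lambda>x. 2^(k+1) * x - 1) -` S)"
  proof (cases "x = 0")
    case False
    then obtain k where "x \<in> dyadic_block k" using ex_dyadic_block[of x] x by auto
    with x show ?thesis using tauB_dyadic_block by auto
  qed (use x in simp)
next
  fix x assume "x \<in> {x\<in>{0}. tauB x \<in> S} \<union> (\<Union>k. dyadic_block k \<inter> (\<lambda>x. 2^(k+1) * x - 1) -` S)"
  then show "x \<in> {x\<in>{0..<1}. tauB x \<in> S}"
    using tauB_dyadic_block dyadic_block_subset by fastforce
qed

lemma sets_tauB_vimage:
  assumes "S \<in> sets borel"
  shows "{x\<in>{0..<1}. tauB x \<in> S} \<in> sets borel"
proof -
  have "{x\<in>{0}. tauB x \<in> S} = (if tauB 0 \<in> S then {0} else {})" by auto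
  then have "{x\<in>{0}. tauB x \<in> S} \<in> sets borel" by simp
  moreover have "(\<lambda>x::real. 2^(k+1) * x - 1) -` S \<in> sets borel" for k
    using measurable_sets_borel[of "\<lambda>x::real. 2^(k+1) * x - 1" borel S] assms by simp
  ultimately show ?thesis
    unfolding tauB_vimage_eq by (auto simp: dyadic_block_def)
qed

lemma emeasure_tauB_vimage_le:
  assumes S: "S \<in> sets borel"
  shows "emeasure lborel {x\<in>{0..<1}. tauB x \<in> S} \<le> emeasure lborel S"
proof -
  define g where "g k = (\<lambda>x::real. 2^(k+1) * x - 1) -` S" for k :: nat
  have g: "g k \<in> sets borel" for k
    using measurable_sets_borel[of "\<lambda>x::real. 2^(k+1) * x - 1" borel S] S by (simp add: g_def)
  have "{x\<in>{0}. tauB x \<in> S} = (if tauB 0 \<in> S then {0} else {})" by auto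
  then have zero: "{x\<in>{0}. tauB x \<in> S} \<in> null_sets lborel"
    by (simp add: countable_imp_null_set_lborel)
  have "emeasure lborel {x\<in>{0..<1}. tauB x \<in> S} = emeasure lborel (\<Union>k. dyadic_block k \<inter> g k)"
    unfolding tauB_vimage_eq g_def Un_commute[of "{x\<in>{0}. tauB x \<in> S}"] using zero g
    by (intro emeasure_Un_null_set) (auto simp: g_def dyadic_block_def)
  also have "\<dots> \<le> (\<Sum>k. emeasure lborel (dyadic_block k \<inter> g k))"
    using g by (intro emeasure_subadditive_countably) (auto simp: dyadic_block_def)
  also have "\<dots> \<le> (\<Sum>k. emeasure lborel (g k))"
    using g by (intro suminf_le summableI emeasure_mono) auto
  also have "\<dots> = (\<Sum>k. ennreal (1/2^(k+1))) * emeasure lborel S"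
    using emeasure_lborel_affine_vimage[OF S, of "2^(k+1)" "-1" for k] by (simp add: g_def)
  also have "(\<Sum>k. ennreal (1/2^(k+1))) = 1"
    using power_half_series by (subst suminf_ennreal_eq) (auto simp: power_one_over)
  finally show ?thesis by simp
qed

lemma funpow_tauB_vimage_Suc:
  "{x\<in>{0..<1}. (tauB ^^ Suc j) x \<in> A} = {x\<in>{0..<1}. tauB x \<in> {y\<in>{0..<1}. (tauB ^^ j) y \<in> A}}"
  using tauB_range by (auto simp: funpow_Suc_right simp del: funpow.simps)

lemma sets_funpow_tauB_vimage:
  assumes "A \<in> sets borel"
  shows "{x\<in>{0..<1}. (tauB ^^ j) x \<in> A} \<in> sets borel"
proof (induction j)
  case 0
  show ?case using assms by (simp add: Collect_conj_eq Int_commute)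
qed (simp only: funpow_tauB_vimage_Suc sets_tauB_vimage)

lemma emeasure_funpow_tauB_vimage_le:
  assumes "A \<in> sets borel"
  shows "emeasure lborel {x\<in>{0..<1}. (tauB ^^ j) x \<in> A} \<le> emeasure lborel (A \<inter> {0..<1})"
proof (induction j)
  case 0
  have "{x\<in>{0..<1}. (tauB ^^ 0) x \<in> A} = A \<inter> {0..<1}" by auto
  then show ?case by simp
next
  case (Suc j)
  have "emeasure lborel {x\<in>{0..<1}. (tauB ^^ Suc j) x \<in> A}
      \<le> emeasure lborel {y\<in>{0..<1}. (tauB ^^ j) y \<in> A}"
    unfolding funpow_tauB_vimage_Suc
    by (intro emeasure_tauB_vimage_le sets_funpow_tauB_vimage assms)
  with Suc.IH show ?case by simp
qed

lemma chi_ge_subset: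
  assumes "0 < t"
  shows "{y. t \<le> real_of_int (chi y)} \<subseteq> {0<..1/t}"
proof
  fix y assume y: "y \<in> {y. t \<le> real_of_int (chi y)}"
  then have "t \<le> real_of_int \<lfloor>1/y\<rfloor>" by (simp add: chi_def)
  then have t: "t \<le> 1/y" using of_int_floor_le[of "1/y"] by linarith
  with assms have "0 < 1/y" by linarith
  then have "0 < y" by (simp add: zero_less_divide_1_iff)
  with t assms show "y \<in> {0<..1/t}" by (simp add: field_simps)
qed

lemma sets_beta_ge: "{x\<in>{0..<1}. t \<le> real_of_int (beta i x)} \<in> sets borel"
proof -
  have "{y. t \<le> real_of_int (chi y)} \<in> sets borel" unfolding chi_def by measurable
  from sets_funpow_tauB_vimage[OF this, of "i - 1"] show ?thesis by (simp add: beta_def)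
qed

lemma measure_beta_ge_le:
  assumes "0 < t"
  shows "measure lborel {x\<in>{0..<1}. t \<le> real_of_int (beta i x)} \<le> 1/t"
proof -
  have "emeasure lborel {x\<in>{0..<1}. t \<le> real_of_int (beta i x)}
      \<le> emeasure lborel {x\<in>{0..<1}. (tauB ^^ (i - 1)) x \<in> {0<..1/t}}"
    using chi_ge_subset[OF assms] sets_funpow_tauB_vimage[of "{0<..1/t}" "i - 1"]
    by (intro emeasure_mono) (auto simp: beta_def)
  also have "\<dots> \<le> emeasure lborel {0<..1/t}"
    by (rule order_trans[OF emeasure_funpow_tauB_vimage_le emeasure_mono]) auto
  also have "\<dots> = ennreal (1/t)" using assms by simp
  finally show ?thesis unfolding measure_def using assms by (intro enn2real_leI) simp_all
qed

text \<open>All times \<open>n\<close> with \<open>nat \<lfloor>ln n\<rfloor> = k\<close> satisfy \<open>e^k \<le> n < e^(k+1)\<close>, so an exceedance at any of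
  them lies in this single event.\<close>
definition beta_exceedance :: "(nat \<Rightarrow> real) \<Rightarrow> nat \<Rightarrow> real set" where
  "beta_exceedance \<psi> k = (\<Union>i\<in>{1..nat \<lceil>exp (real k + 1)\<rceil>}.
     {x\<in>{0..<1}. exp (real k) * \<psi> k \<le> real_of_int (beta i x)})"

lemma sets_beta_exceedance: "beta_exceedance \<psi> k \<in> sets lborel"
  unfolding beta_exceedance_def using sets_beta_ge by auto

lemma emeasure_beta_exceedance_finite: "emeasure lborel (beta_exceedance \<psi> k) < \<infinity>"
proof -
  have "emeasure lborel (beta_exceedance \<psi> k) \<le> emeasure lborel {0..<1::real}"
    by (rule emeasure_mono) (auto simp: beta_exceedance_def)
  then show ?thesis by (simp add: le_less_trans)
qed

lemma nat_ceiling_exp_plus_one_le: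
  assumes "0 \<le> r"
  shows "real (nat \<lceil>exp (r + 1)\<rceil>) \<le> (exp 1 + 1) * exp r"
proof -
  have "real (nat \<lceil>exp (r + 1)\<rceil>) = real_of_int \<lceil>exp (r + 1)\<rceil>"
    by (simp add: less_imp_le)
  also have "\<dots> \<le> exp 1 * exp r + 1" using of_int_ceiling_le_add_one[of "exp (r + 1)"]
    by (simp add: exp_add mult.commute)
  also have "\<dots> \<le> (exp 1 + 1) * exp r" using assms by (simp add: algebra_simps)
  finally show ?thesis .
qed

lemma measure_beta_exceedance_le:
  assumes "0 < \<psi> k"
  shows "measure lborel (beta_exceedance \<psi> k) \<le> (exp 1 + 1) / \<psi> k"
proof -
  define t where "t = exp (real k) * \<psi> k"
  have t: "0 < t" using assms by (simp add: t_def)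
  have "measure lborel (beta_exceedance \<psi> k)
      \<le> (\<Sum>i\<in>{1..nat \<lceil>exp (real k + 1)\<rceil>}. measure lborel {x\<in>{0..<1}. t \<le> real_of_int (beta i x)})"
    unfolding beta_exceedance_def t_def using sets_beta_ge by (intro measure_UNION_le) auto
  also have "\<dots> \<le> (\<Sum>i\<in>{1..nat \<lceil>exp (real k + 1)\<rceil>}. 1/t)"
    by (intro sum_mono measure_beta_ge_le t)
  also have "\<dots> = real (nat \<lceil>exp (real k + 1)\<rceil>) * (1/t)" by simp
  also have "\<dots> \<le> (exp 1 + 1) * exp (real k) * (1/t)"
    using nat_ceiling_exp_plus_one_le[of "real k"] t by (intro mult_right_mono) simp_all
  also have "\<dots> = (exp 1 + 1) / \<psi> k" using assms by (simp add: t_def)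
  finally show ?thesis .
qed

lemma exp_nat_floor_ln_bounds:
  assumes "1 \<le> x"
  shows "exp (real (nat \<lfloor>ln x\<rfloor>)) \<le> x" "x < exp (real (nat \<lfloor>ln x\<rfloor>) + 1)"
proof -
  have k: "real (nat \<lfloor>ln x\<rfloor>) = real_of_int \<lfloor>ln x\<rfloor>" using assms by simp
  have "exp (real_of_int \<lfloor>ln x\<rfloor>) \<le> exp (ln x)" by simp
  then show "exp (real (nat \<lfloor>ln x\<rfloor>)) \<le> x" using assms by (simp add: k)
  have "exp (ln x) < exp (real_of_int \<lfloor>ln x\<rfloor> + 1)" by simp
  then show "x < exp (real (nat \<lfloor>ln x\<rfloor>) + 1)" using assms by (simp add: k)
qed

lemma beta_exceedance_at_time:
  assumes "1 \<le> n" "i \<in> {1..n}" "x \<in> {0..<1}" "0 \<le> \<psi> (nat \<lfloor>ln (real n)\<rfloor>)"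
    and "real n * \<psi> (nat \<lfloor>ln (real n)\<rfloor>) \<le> real_of_int (beta i x)"
  shows "x \<in> beta_exceedance \<psi> (nat \<lfloor>ln (real n)\<rfloor>)"
proof -
  define k where "k = nat \<lfloor>ln (real n)\<rfloor>"
  have n: "exp (real k) \<le> real n" "real n < exp (real k + 1)"
    using exp_nat_floor_ln_bounds[of "real n"] assms(1) by (simp_all add: k_def)
  have "real i \<le> real n" using assms(2) by simp
  with n(2) have "i \<le> nat \<lceil>exp (real k + 1)\<rceil>" by linarith
  moreover have "exp (real k) * \<psi> k \<le> real_of_int (beta i x)"
    using mult_right_mono[OF n(1), of "\<psi> k"] assms(4,5) unfolding k_def by linarith
  ultimately show ?thesis using assms(2,3) unfolding beta_exceedance_def k_def by auto
qed

lemma filterlim_nat_floor_ln: "filterlim (\<lambda>n::nat. nat \<lfloor>ln (real n)\<rfloor>) sequentially sequentially"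
  by (intro filterlim_compose[OF filterlim_nat_sequentially] filterlim_compose[OF filterlim_floor_sequentially]
      filterlim_compose[OF ln_at_top] filterlim_real_sequentially)

lemma not_frequently_beta_exceedance:
  assumes pos: "\<forall>k\<ge>1. 0 < \<psi> k" and x: "x \<in> {0..<1}"
    and eventually_out: "\<forall>\<^sub>F k in sequentially. x \<notin> beta_exceedance \<psi> k"
  shows "\<not> (\<exists>\<^sub>\<infinity> n::nat. card {i \<in> {1..n}.
           real_of_int (beta i x) \<ge> real n * \<psi> (nat \<lfloor>ln (real n)\<rfloor>)} \<ge> 1)"
proof -
  have "\<forall>\<^sub>F k in sequentially. x \<notin> beta_exceedance \<psi> k \<and> 0 < \<psi> k"
    using eventually_out eventually_ge_at_top[of 1] by eventually_elim (use pos in auto)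
  from eventually_compose_filterlim[OF this filterlim_nat_floor_ln]
  have "\<forall>\<^sub>F n in sequentially. x \<notin> beta_exceedance \<psi> (nat \<lfloor>ln (real n)\<rfloor>)
      \<and> 0 < \<psi> (nat \<lfloor>ln (real n)\<rfloor>) \<and> 1 \<le> n"
    using eventually_ge_at_top[of 1] by eventually_elim auto
  then have "\<forall>\<^sub>F n in sequentially. {i \<in> {1..n}.
      real_of_int (beta i x) \<ge> real n * \<psi> (nat \<lfloor>ln (real n)\<rfloor>)} = {}"
  proof eventually_elim
    case (elim n)
    then show ?case using beta_exceedance_at_time[of n _ x \<psi>] x by (auto intro: less_imp_le)
  qed
  then show ?thesis
    unfolding cofinite_eq_sequentially not_frequently
    by eventually_elim (simp only: card.empty not_one_le_zero not_False_eq_True)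
qed

theorem mainTheorem10:
  fixes \<psi> :: "nat \<Rightarrow> real"
  assumes pos: "\<forall>n\<ge>1. \<psi> n > 0"
    and summ: "summable (\<lambda>n. 1 / \<psi> (Suc n))"
  shows "AE x in lebesgue_on {0..<1}.
           \<not> (\<exists>\<^sub>\<infinity> n::nat. card {i \<in> {1..n}.
                real_of_int (beta i x) \<ge> real n * \<psi> (nat \<lfloor>ln (real n)\<rfloor>)} \<ge> 1)"
proof -
  have "summable (\<lambda>k. (exp 1 + 1) / \<psi> k)"
    using summable_mult[OF summ, of "exp 1 + 1"] summable_Suc_iff[of "\<lambda>k. (exp 1 + 1) / \<psi> k"]
    by simp
  moreover have "norm (measure lborel (beta_exceedance \<psi> k)) \<le> (exp 1 + 1) / \<psi> k" if "1 \<le> k" for k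
    using pos that by (simp add: measure_beta_exceedance_le)
  ultimately have "summable (\<lambda>k. measure lborel (beta_exceedance \<psi> k))"
    by (rule summable_comparison_test'[of _ 1])
  then have "AE x in lborel. \<forall>\<^sub>F k in sequentially. x \<in> space lborel - beta_exceedance \<psi> k"
    by (rule borel_cantelli_AE1[OF sets_beta_exceedance emeasure_beta_exceedance_finite])
  then have "AE x in lebesgue. \<forall>\<^sub>F k in sequentially. x \<notin> beta_exceedance \<psi> k"
    by (intro AE_completion) simp
  moreover have "{0..<1} \<inter> space lebesgue \<in> sets (lebesgue :: real measure)" by simp
  ultimately show ?thesis
    by (simp only: AE_restrict_space_iff)
       (use not_frequently_beta_exceedance[OF pos] in \<open>auto elim!: AE_mp\<close>)
qed

end
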